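(* Let $d\ge2$ and consider a $d$-dimensional system in the maximally mixed initial state $\mathbb{1}/d$, with two measurement settings $x,y\in\{0,1\}$ and outcomes $\pm$. Each measurement $x$ is specified by effects $\mathcal{E}_{\pm|x}$ (positive semidefinite, summing to $\mathbb{1}$) and post-measurement states $\sigma_{\pm|x}$, the same measurements being used at both time steps, with $p(ab|xy)=\mathrm{tr}(\mathcal{E}_{a|x}\mathbb{1}/d)\,\mathrm{tr}(\mathcal{E}_{b|y}\sigma_{a|x})$. Then, for all such choices, $$\mathcal{B}_1=p(++|00)+p(++|11)+p(+-|01)+p(+-|10)\le \max\left[3,\,4\left(1-\tfrac1d\right)\right].$$ *)

theory Defs
  imports "HOL-Analysis.Analysis"
begin

text \<open>Positive semidefinite complex matrix: the quadratic form v* A v is real and nonnegative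
  for every complex vector v (this implies Hermiticity).\<close>
definition psd :: "complex^'n^'n \<Rightarrow> bool" where
  "psd A \<longleftrightarrow> (\<forall>v::complex^'n.
     let q = (\<Sum>i\<in>UNIV. \<Sum>j\<in>UNIV. cnj (v$i) * A$i$j * v$j) in Im q = 0 \<and> Re q \<ge> 0)"

definition density :: "complex^'n^'n \<Rightarrow> bool" where
  "density \<sigma> \<longleftrightarrow> psd \<sigma> \<and> trace \<sigma> = 1"

text \<open>A two-outcome measurement (outcome True = +, False = -): effects are PSD and sum to the identity.\<close>
definition povm2 :: "(bool \<Rightarrow> complex^'n^'n) \<Rightarrow> bool" where
  "povm2 E \<longleftrightarrow> (\<forall>a. psd (E a)) \<and> E True + E False = mat 1"

definition seqprob ::
  "(bool \<Rightarrow> bool \<Rightarrow> complex^'n^'n) \<Rightarrow> (bool \<Rightarrow> bool \<Rightarrow> complex^'n^'n)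
     \<Rightarrow> bool \<Rightarrow> bool \<Rightarrow> bool \<Rightarrow> bool \<Rightarrow> complex" where
  "seqprob E \<sigma> a b x y =
     trace (E a x ** ((1 / of_nat CARD('n)) *\<^sub>R mat 1 :: complex^'n^'n)) * trace (E b y ** \<sigma> a x)"

end

theory Submission
  imports Defs
begin

(* Write P = E(+|0), Q = E(+|1), s0 = sigma(+|0), s1 = sigma(+|1) and let d be the dimension.
   Since E(-|x) = 1 - E(+|x) and tr s0 = tr s1 = 1, the Bell sum equals
     tr P / d * (tr(P s0) + 1 - tr(Q s0)) + tr Q / d * (tr(Q s1) + 1 - tr(P s1)).
   Every tr(A s) with 0 <= A <= 1 lies in [0,1], and tr((1 - Q)(1 - s0)) >= 0 gives
   tr Q <= d - 1 + tr(Q s0); similarly tr P <= d - 1 + tr(P s1). The sum is therefore bounded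
   by a bilinear function of s = tr(P s0) - tr(Q s0) and t = tr(Q s1) - tr(P s1) on [-1,1]^2,
   whose corners give max(3d, 4d - 4).
   All operator inequalities rest on tr(XY) >= 0 for positive semidefinite X and Y, proved
   without the spectral theorem by peeling rank-one Schur complements off Y. *)

definition sesq_form :: "complex^'n^'n \<Rightarrow> complex^'n \<Rightarrow> complex^'n \<Rightarrow> complex" where
  "sesq_form Y u v = (\<Sum>i\<in>UNIV. \<Sum>j\<in>UNIV. cnj (u$i) * Y$i$j * v$j)"

lemma sesq_form_add_left: "sesq_form Y (u + w) v = sesq_form Y u v + sesq_form Y w v"
  unfolding sesq_form_def by (simp add: distrib_right sum.distrib)

lemma sesq_form_add_right: "sesq_form Y u (v + w) = sesq_form Y u v + sesq_form Y u w"
  unfolding sesq_form_def by (simp add: distrib_left sum.distrib)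

lemma sesq_form_diff: "sesq_form (A - B) u v = sesq_form A u v - sesq_form B u v"
  unfolding sesq_form_def by (simp add: algebra_simps sum_subtractf)

lemma sesq_form_axis_left: "sesq_form Y (axis k a) v = cnj a * (\<Sum>j\<in>UNIV. Y$k$j * v$j)"
proof -
  have "sesq_form Y (axis k a) v = (\<Sum>i\<in>UNIV. cnj (axis k a $ i) * (\<Sum>j\<in>UNIV. Y$i$j * v$j))"
    unfolding sesq_form_def by (simp add: sum_distrib_left mult.assoc)
  then show ?thesis by (simp add: axis_def if_distrib[where f = "\<lambda>x. cnj x * _"] cong: if_cong)
qed

lemma sesq_form_axis_right: "sesq_form Y u (axis k b) = (\<Sum>i\<in>UNIV. cnj (u$i) * Y$i$k) * b"
  unfolding sesq_form_def axis_def
  by (simp add: if_distrib[where f = "\<lambda>x. _ * x"] sum_distrib_right cong: if_cong)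

lemma sesq_form_axis_axis: "sesq_form Y (axis i a) (axis j b) = cnj a * Y$i$j * b"
  unfolding sesq_form_axis_left
  by (simp add: axis_def if_distrib[where f = "\<lambda>x. _ * x"] mult.assoc cong: if_cong)

lemma sesq_form_two_axes:
  "sesq_form Y (axis i a + axis j b) (axis i a + axis j b)
     = cnj a * Y$i$i * a + cnj a * Y$i$j * b + cnj b * Y$j$i * a + cnj b * Y$j$j * b"
  by (simp add: sesq_form_add_left sesq_form_add_right sesq_form_axis_axis)

lemma sesq_form_add_axis:
  "sesq_form Y (v + axis k t) (v + axis k t) = sesq_form Y v v
     + (\<Sum>i\<in>UNIV. cnj (v$i) * Y$i$k) * t + cnj t * (\<Sum>j\<in>UNIV. Y$k$j * v$j) + cnj t * Y$k$k * t"
  unfolding sesq_form_add_left sesq_form_add_right sesq_form_axis_axis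
  by (simp add: sesq_form_axis_left sesq_form_axis_right)

lemma sesq_form_mat: "sesq_form (mat c) u v = c * (\<Sum>i\<in>UNIV. cnj (u$i) * v$i)"
proof -
  have "(\<Sum>j\<in>UNIV. cnj (u$i) * mat c $ i $ j * v$j) = c * (cnj (u$i) * v$i)" for i
    by (simp add: mat_def if_distrib[where f = "\<lambda>x. _ * x * _"] cong: if_cong)
  then show ?thesis unfolding sesq_form_def sum_distrib_left by simp
qed

lemma sum_cnj_mult_self:
  "(\<Sum>i\<in>UNIV. cnj (v$i) * v$i) = of_real (\<Sum>i\<in>UNIV. (cmod (v$i))\<^sup>2)"
  unfolding of_real_sum complex_norm_square by (simp add: mult.commute)

lemma psd_iff_sesq_form:
  "psd Y \<longleftrightarrow> (\<forall>v. Im (sesq_form Y v v) = 0 \<and> 0 \<le> Re (sesq_form Y v v))"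
  unfolding psd_def sesq_form_def Let_def by blast

lemma psd_sesq_form:
  assumes "psd Y" shows "Im (sesq_form Y v v) = 0" "0 \<le> Re (sesq_form Y v v)"
  using assms unfolding psd_iff_sesq_form by blast+

lemma psd_diag:
  assumes "psd Y" shows "Im (Y$i$i) = 0" "0 \<le> Re (Y$i$i)"
  using psd_sesq_form[OF assms, of "axis i 1"] by (simp_all add: sesq_form_axis_axis)

lemma psd_hermitian:
  assumes "psd Y" shows "Y$j$i = cnj (Y$i$j)"
proof -
  have "Im (Y$i$j + Y$j$i) = 0"
    using psd_sesq_form(1)[OF assms, of "axis i 1 + axis j 1"] psd_diag(1)[OF assms]
    by (simp add: sesq_form_two_axes)
  moreover have "Re (Y$i$j - Y$j$i) = 0"
    using psd_sesq_form(1)[OF assms, of "axis i 1 + axis j \<i>"] psd_diag(1)[OF assms]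
    by (simp add: sesq_form_two_axes)
  ultimately show ?thesis by (simp add: complex_eq_iff)
qed

lemma psd_diag_zero_imp_row_zero:
  assumes Y: "psd Y" and "Y$i$i = 0" shows "Y$i$j = 0"
proof (rule ccontr)
  define z y where "z = Y$i$j" and "y = Re (Y$j$j)"
  assume "Y$i$j \<noteq> 0"
  then have n: "0 < (cmod z)\<^sup>2" unfolding z_def by simp
  define a where "a = - of_real ((y + 1) / (cmod z)\<^sup>2) * z"
  have "cnj a * z = - of_real (y + 1)" and "cnj z * a = - of_real (y + 1)"
    using n unfolding a_def by (simp_all add: complex_norm_square[symmetric] field_simps)
  then have "Re (sesq_form Y (axis i a + axis j 1) (axis i a + axis j 1)) = - y - 2"
    using \<open>Y$i$i = 0\<close> psd_hermitian[OF Y, of i j] unfolding sesq_form_two_axes z_def y_def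
    by simp
  moreover have "0 \<le> y" unfolding y_def by (rule psd_diag(2)[OF Y])
  ultimately show False using psd_sesq_form(2)[OF Y, of "axis i a + axis j 1"] by linarith
qed

lemma psd_schur_complement:
  fixes Y :: "complex^'n^'n"
  assumes Y: "psd Y" and nz: "Y$k$k \<noteq> 0"
  shows "psd (\<chi> i j. Y$i$j - Y$i$k * Y$k$j / Y$k$k)" (is "psd ?S")
  unfolding psd_iff_sesq_form
proof
  fix v :: "complex^'n"
  define m where "m = (\<Sum>j\<in>UNIV. Y$k$j * v$j)"
  have cnj_m: "(\<Sum>i\<in>UNIV. cnj (v$i) * Y$i$k) = cnj m"
    unfolding m_def by (simp add: psd_hermitian[OF Y, of k] mult.commute)
  have real_kk: "cnj (Y$k$k) = Y$k$k"
    using psd_diag(1)[OF Y, of k] by (simp add: complex_eq_iff)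
  have "sesq_form ?S v v = sesq_form Y v v - (\<Sum>i\<in>UNIV. cnj (v$i) * Y$i$k) * m / Y$k$k"
    unfolding sesq_form_def m_def sum_product sum_divide_distrib sum_subtractf[symmetric]
    by (intro sum.cong refl) (simp add: algebra_simps diff_divide_distrib)
  also have "\<dots> = sesq_form Y (v + axis k (- m / Y$k$k)) (v + axis k (- m / Y$k$k))"
    unfolding sesq_form_add_axis cnj_m m_def[symmetric] using nz real_kk by (simp add: field_simps)
  finally show "Im (sesq_form ?S v v) = 0 \<and> 0 \<le> Re (sesq_form ?S v v)"
    using psd_sesq_form[OF Y] by simp
qed

lemma trace_matrix_mult: "trace (X ** Y) = (\<Sum>i\<in>UNIV. \<Sum>j\<in>UNIV. X$i$j * Y$j$i)"
  by (simp add: trace_def matrix_matrix_mult_def)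

lemma trace_mult_diff_left:
  fixes A B C :: "'a::comm_ring_1^'n^'n"
  shows "trace ((A - B) ** C) = trace (A ** C) - trace (B ** C)"
  unfolding trace_matrix_mult by (simp add: left_diff_distrib sum_subtractf)

lemma trace_mult_diff_right:
  fixes A B C :: "'a::comm_ring_1^'n^'n"
  shows "trace (A ** (B - C)) = trace (A ** B) - trace (A ** C)"
  unfolding trace_matrix_mult by (simp add: right_diff_distrib sum_subtractf)

lemma psd_trace_real:
  assumes "psd A" shows "Im (trace A) = 0"
  using psd_diag(1)[OF assms] by (simp add: trace_def)

lemma trace_mult_schur_split:
  fixes X Y :: "complex^'n^'n"
  assumes "psd Y"
  shows "trace (X ** Y) = trace (X ** (\<chi> i j. Y$i$j - Y$i$k * Y$k$j / Y$k$k))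
    + sesq_form X (column k Y) (column k Y) / Y$k$k"
proof -
  have "cnj (Y$i$k) = Y$k$i" for i
    using psd_hermitian[OF assms, of i k] by simp
  then show ?thesis
    unfolding trace_matrix_mult sesq_form_def column_def sum_divide_distrib sum.distrib[symmetric]
    by (intro sum.cong refl) (simp add: algebra_simps diff_divide_distrib)
qed

lemma trace_mult_psd_nonneg:
  fixes X Y :: "complex^'n^'n"
  assumes X: "psd X" and Y: "psd Y"
  shows "0 \<le> Re (trace (X ** Y))"
proof -
  have "0 \<le> Re (trace (X ** Y))"
    if "finite S" "psd Y" "\<forall>i\<in>-S. Y$i$i = 0" for S and Y :: "complex^'n^'n"
    using that
  proof (induction S arbitrary: Y rule: finite_induct)
    case empty
    then have "Y = 0" using psd_diag_zero_imp_row_zero by (simp add: vec_eq_iff) blast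
    then show ?case by (simp add: trace_def)
  next
    case (insert k S)
    show ?case
    proof (cases "Y$k$k = 0")
      case True
      then show ?thesis using insert by (metis ComplI Compl_iff insertE)
    next
      case False
      define Y' where "Y' = (\<chi> i j. Y$i$j - Y$i$k * Y$k$j / Y$k$k)"
      have "psd Y'" unfolding Y'_def using psd_schur_complement[OF insert.prems(1) False] .
      moreover have "Y'$i$i = 0" if "i \<notin> S" for i
      proof (cases "i = k")
        case False
        then have "Y$i$i = 0" "Y$i$k = 0"
          using insert.prems \<open>i \<notin> S\<close> psd_diag_zero_imp_row_zero[OF insert.prems(1)] by auto
        then show ?thesis unfolding Y'_def by simp
      qed (use \<open>Y$k$k \<noteq> 0\<close> Y'_def in simp)
      ultimately have IH: "0 \<le> Re (trace (X ** Y'))" using insert.IH by blast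
      have "trace (X ** Y) = trace (X ** Y') + sesq_form X (column k Y) (column k Y) / Y$k$k"
        unfolding Y'_def by (rule trace_mult_schur_split[OF insert.prems(1)])
      moreover have "0 \<le> Re (sesq_form X (column k Y) (column k Y) / Y$k$k)"
      proof -
        have "Y$k$k = of_real (Re (Y$k$k))"
          using psd_diag(1)[OF insert.prems(1)] by (simp add: complex_eq_iff)
        then show ?thesis
          using psd_sesq_form(2)[OF X] psd_diag(2)[OF insert.prems(1), of k]
          by (metis Re_divide_of_real divide_nonneg_nonneg)
      qed
      ultimately show ?thesis using IH by simp
    qed
  qed
  from this[of UNIV] show ?thesis using Y by simp
qed

lemma complex_Cauchy_Schwarz_sum:
  fixes u v :: "'i::finite \<Rightarrow> complex"
  shows "(cmod (\<Sum>i\<in>UNIV. cnj (u i) * v i))\<^sup>2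
    \<le> (\<Sum>i\<in>UNIV. (cmod (u i))\<^sup>2) * (\<Sum>i\<in>UNIV. (cmod (v i))\<^sup>2)"
proof -
  have "cmod (\<Sum>i\<in>UNIV. cnj (u i) * v i) \<le> (\<Sum>i\<in>UNIV. cmod (u i) * cmod (v i))"
    by (rule order_trans[OF norm_sum]) (simp add: norm_mult)
  then have "(cmod (\<Sum>i\<in>UNIV. cnj (u i) * v i))\<^sup>2
      \<le> (\<Sum>i\<in>UNIV. cmod (u i) * cmod (v i))\<^sup>2"
    by (simp add: power_mono)
  also have "\<dots> \<le> (\<Sum>i\<in>UNIV. (cmod (u i))\<^sup>2) * (\<Sum>i\<in>UNIV. (cmod (v i))\<^sup>2)"
    by (rule Cauchy_Schwarz_ineq_sum)
  finally show ?thesis .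
qed

lemma psd_norm_mat_minus_outer:
  fixes v :: "complex^'n"
  shows "psd (mat (of_real (\<Sum>i\<in>UNIV. (cmod (v$i))\<^sup>2)) - (\<chi> i j. v$i * cnj (v$j)))"
    (is "psd ?M")
  unfolding psd_iff_sesq_form
proof
  fix w :: "complex^'n"
  define z where "z = (\<Sum>i\<in>UNIV. cnj (w$i) * v$i)"
  have "sesq_form (\<chi> i j. v$i * cnj (v$j)) w w = z * cnj z"
    unfolding sesq_form_def z_def cnj_sum sum_product by (simp add: algebra_simps)
  then have "sesq_form ?M w w = of_real ((\<Sum>i\<in>UNIV. (cmod (v$i))\<^sup>2) * (\<Sum>i\<in>UNIV. (cmod (w$i))\<^sup>2) - (cmod z)\<^sup>2)"
    unfolding sesq_form_diff sesq_form_mat sum_cnj_mult_self complex_norm_square[symmetric]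
    by simp
  moreover have "(cmod z)\<^sup>2 \<le> (\<Sum>i\<in>UNIV. (cmod (w$i))\<^sup>2) * (\<Sum>i\<in>UNIV. (cmod (v$i))\<^sup>2)"
    unfolding z_def by (rule complex_Cauchy_Schwarz_sum)
  ultimately show "Im (sesq_form ?M w w) = 0 \<and> 0 \<le> Re (sesq_form ?M w w)"
    by (simp add: mult.commute)
qed

(* (v^H sigma v) <= |v|^2 tr sigma, because tr(sigma (|v|^2 I - v v^H)) >= 0. *)
lemma psd_mat1_minus_density:
  fixes \<sigma> :: "complex^'n^'n"
  assumes "density \<sigma>"
  shows "psd (mat 1 - \<sigma>)"
  unfolding psd_iff_sesq_form
proof
  fix v :: "complex^'n"
  define N where "N = (\<Sum>i\<in>UNIV. (cmod (v$i))\<^sup>2)"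
  define M where "M = (mat (of_real N) - (\<chi> i j. v$i * cnj (v$j)) :: complex^'n^'n)"
  have \<sigma>: "psd \<sigma>" "trace \<sigma> = 1" using assms unfolding density_def by auto
  have "trace (\<sigma> ** M) = (\<Sum>i\<in>UNIV. \<Sum>j\<in>UNIV. \<sigma>$i$j * M$j$i)"
    by (rule trace_matrix_mult)
  also have "\<dots> = of_real N * trace \<sigma> - sesq_form \<sigma> v v"
    unfolding M_def sesq_form_def trace_def mat_def
    by (simp add: sum_subtractf right_diff_distrib if_distrib[where f = "\<lambda>x. _ * x"]
        sum_distrib_left algebra_simps cong: if_cong)
  also have "\<dots> = sesq_form (mat 1 - \<sigma>) v v"
    by (simp add: \<sigma>(2) sesq_form_diff sesq_form_mat sum_cnj_mult_self N_def)
  finally have "sesq_form (mat 1 - \<sigma>) v v = trace (\<sigma> ** M)" ..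
  moreover have "0 \<le> Re (trace (\<sigma> ** M))"
    using trace_mult_psd_nonneg[OF \<sigma>(1) psd_norm_mat_minus_outer] unfolding M_def N_def .
  moreover have "Im (sesq_form (mat 1 - \<sigma>) v v) = 0"
    using psd_sesq_form(1)[OF \<sigma>(1)]
    by (simp add: sesq_form_diff sesq_form_mat sum_cnj_mult_self)
  ultimately show "Im (sesq_form (mat 1 - \<sigma>) v v) = 0 \<and> 0 \<le> Re (sesq_form (mat 1 - \<sigma>) v v)"
    by simp
qed

lemma povm2_effects:
  assumes "povm2 E"
  shows "psd (E True)" "psd (mat 1 - E True)" "E False = mat 1 - E True"
  using assms unfolding povm2_def by (metis add_diff_cancel_left')+

lemma povm2_trace_mult_density:
  fixes E :: "bool \<Rightarrow> complex^'n^'n"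
  assumes E: "povm2 E" and \<sigma>: "density \<sigma>"
  shows "0 \<le> Re (trace (E True ** \<sigma>))" "Re (trace (E True ** \<sigma>)) \<le> 1"
    and "Re (trace (E False ** \<sigma>)) = 1 - Re (trace (E True ** \<sigma>))"
    and "Re (trace (E True)) \<le> real CARD('n) - 1 + Re (trace (E True ** \<sigma>))"
proof -
  have tr: "trace \<sigma> = 1" and psd_\<sigma>: "psd \<sigma>" using \<sigma> unfolding density_def by auto
  have complement: "trace ((mat 1 - E True) ** \<sigma>) = 1 - trace (E True ** \<sigma>)"
    by (simp add: trace_mult_diff_left tr)
  show "0 \<le> Re (trace (E True ** \<sigma>))"
    using trace_mult_psd_nonneg[OF povm2_effects(1)[OF E] psd_\<sigma>] .
  show "Re (trace (E True ** \<sigma>)) \<le> 1"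
    using trace_mult_psd_nonneg[OF povm2_effects(2)[OF E] psd_\<sigma>] complement by simp
  show "Re (trace (E False ** \<sigma>)) = 1 - Re (trace (E True ** \<sigma>))"
    using complement povm2_effects(3)[OF E] by simp
  have "trace ((mat 1 - E True) ** (mat 1 - \<sigma>))
      = of_nat CARD('n) - 1 - trace (E True) + trace (E True ** \<sigma>)"
    by (simp add: trace_mult_diff_left trace_mult_diff_right trace_sub trace_I tr)
  then show "Re (trace (E True)) \<le> real CARD('n) - 1 + Re (trace (E True ** \<sigma>))"
    using trace_mult_psd_nonneg[OF povm2_effects(2)[OF E] psd_mat1_minus_density[OF \<sigma>]]
    by simp
qed

lemma Re_seqprob:
  fixes E \<sigma> :: "bool \<Rightarrow> bool \<Rightarrow> complex^'n^'n"
  assumes "psd (E a x)"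
  shows "Re (seqprob E \<sigma> a b x y)
    = Re (trace (E a x)) / real CARD('n) * Re (trace (E b y ** \<sigma> a x))"
proof -
  have "trace (E a x ** ((1 / of_nat CARD('n)) *\<^sub>R mat 1))
      = (1 / real CARD('n)) *\<^sub>R trace (E a x)"
    by (simp add: matrix_scalar_ac trace_def scaleR_sum_right)
  then show ?thesis
    using psd_trace_real[OF assms] unfolding seqprob_def by (simp add: scaleR_conv_of_real)
qed

lemma bilinear_box_bound:
  fixes d s t :: real
  assumes d: "2 \<le> d" and s: "\<bar>s\<bar> \<le> 1" and t: "\<bar>t\<bar> \<le> 1"
  shows "(d - t) * (1 + s) + (d - s) * (1 + t) \<le> max (3 * d) (4 * d - 4)"
proof (cases "3 \<le> d")
  case True
  have "4 * d - 4 - ((d - t) * (1 + s) + (d - s) * (1 + t))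
      = (d - 3) * (2 - s - t) + 2 * ((1 - s) * (1 - t))"
    by (simp add: algebra_simps)
  moreover have "0 \<le> (d - 3) * (2 - s - t)" "0 \<le> (1 - s) * (1 - t)"
    using True s t by auto
  ultimately show ?thesis by linarith
next
  case False
  have "3 * d - ((d - t) * (1 + s) + (d - s) * (1 + t))
      = (3 - d) * (1 + s * t) + (d - 2) + (d - 1) * ((1 - s) * (1 - t))"
    by (simp add: algebra_simps)
  moreover have "\<bar>s * t\<bar> \<le> 1"
    using s t by (simp add: abs_mult mult_le_one)
  then have "0 \<le> (3 - d) * (1 + s * t)" using False by auto
  moreover have "0 \<le> (d - 1) * ((1 - s) * (1 - t))"
    using d s t by auto
  ultimately show ?thesis using d by linarith
qed

lemma B1_real_bound:
  fixes d p q a0 b0 a1 b1 :: real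
  assumes d: "2 \<le> d"
    and "0 \<le> a0" "a0 \<le> 1" "0 \<le> b0" "b0 \<le> 1" "0 \<le> a1" "a1 \<le> 1" "0 \<le> b1" "b1 \<le> 1"
    and p: "p \<le> d - 1 + a1" and q: "q \<le> d - 1 + b0"
  shows "p / d * (a0 + (1 - b0)) + q / d * (b1 + (1 - a1)) \<le> max 3 (4 * (1 - 1 / d))"
proof -
  define s t where "s = a0 - b0" and "t = b1 - a1"
  have st: "\<bar>s\<bar> \<le> 1" "\<bar>t\<bar> \<le> 1" using assms unfolding s_def t_def by auto
  have "p * (1 + s) \<le> (d - t) * (1 + s)"
    using p st assms unfolding t_def by (intro mult_right_mono) auto
  moreover have "q * (1 + t) \<le> (d - s) * (1 + t)"
    using q st assms unfolding s_def by (intro mult_right_mono) auto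
  ultimately have "p * (1 + s) + q * (1 + t) \<le> max (3 * d) (4 * d - 4)"
    using bilinear_box_bound[OF d st] by linarith
  then have "(p * (1 + s) + q * (1 + t)) / d \<le> max (3 * d) (4 * d - 4) / d"
    using d by (simp add: divide_right_mono)
  also have "\<dots> = max 3 (4 * (1 - 1 / d))"
    using d by (simp add: max_divide_distrib_right field_simps)
  also have "(p * (1 + s) + q * (1 + t)) / d = p / d * (a0 + (1 - b0)) + q / d * (b1 + (1 - a1))"
    using d unfolding s_def t_def by (simp add: field_simps)
  finally show ?thesis .
qed

theorem mainTheorem6:
  fixes E \<sigma> :: "bool \<Rightarrow> bool \<Rightarrow> complex^'n^'n"
  assumes "CARD('n) \<ge> 2"
    and "\<And>x. povm2 (\<lambda>a. E a x)"
    and "\<And>a x. density (\<sigma> a x)"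
  shows "Re (seqprob E \<sigma> True True False False + seqprob E \<sigma> True True True True
           + seqprob E \<sigma> True False False True + seqprob E \<sigma> True False True False)
         \<le> max 3 (4 * (1 - 1 / real CARD('n)))"
proof -
  define d where "d = real CARD('n)"
  have "2 \<le> d" using assms(1) unfolding d_def by simp
  have Re_p: "Re (seqprob E \<sigma> True b x y)
      = Re (trace (E True x)) / d * Re (trace (E b y ** \<sigma> True x))" for b x y by (simp add: Re_seqprob povm2_effects(1)[OF assms(2)] d_def)
  note effect = povm2_trace_mult_density[OF assms(2) assms(3), folded d_def]
  have "Re (seqprob E \<sigma> True True False False + seqprob E \<sigma> True True True True
           + seqprob E \<sigma> True False False True + seqprob E \<sigma> True False True False)
      = Re (trace (E True False)) / d
          * (Re (trace (E True False ** \<sigma> True False))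
             + (1 - Re (trace (E True True ** \<sigma> True False))))
      + Re (trace (E True True)) / d
          * (Re (trace (E True True ** \<sigma> True True))
             + (1 - Re (trace (E True False ** \<sigma> True True))))"
    by (simp add: Re_p effect(3) algebra_simps)
  also have "\<dots> \<le> max 3 (4 * (1 - 1 / d))"
    by (rule B1_real_bound) (use \<open>2 \<le> d\<close> effect in auto)
  finally show ?thesis unfolding d_def .
qed

end
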